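(* Let $1\le k<\infty$, and let $T=S_k+F$ on the Hardy space $H^2(\mathbb{D})$, where $S_kz^n=z^{n+k}$ ($n\ge0$) and $F$ is defined by $F(1)=\alpha_0+\alpha_1z+\cdots+\alpha_{k-1}z^{k-1}+(\alpha_k-1)z^k$ and $F(z^n)=0$ for $n\ge1$, with $\alpha_0,\dots,\alpha_k\in\mathbb{C}$ and $0<|\alpha_0|\le1$. Then $T$ is analytic if and only if $\alpha_j\neq0$ for some $1\le j\le k$.
   Context: $H^2(\mathbb{D})$ is the Hardy space with orthonormal basis $\{z^n\}_{n\ge0}$. An operator $T$ on a Hilbert space $\mathcal{H}$ is analytic if $\bigcap_{m\ge1}T^m\mathcal{H}=\{0\}$. *)

theory Defs
  imports "HOL-Analysis.Analysis"
begin

text \<open>The Hardy space H^2(D), identified (isometrically) with its Taylor coefficient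
  sequences w.r.t. the orthonormal basis z^n: f = sum_n f n * z^n.\<close>
definition H2 :: "(nat \<Rightarrow> complex) set" where
  "H2 = {f. summable (\<lambda>n. (cmod (f n))\<^sup>2)}"

definition shift_k :: "nat \<Rightarrow> (nat \<Rightarrow> complex) \<Rightarrow> (nat \<Rightarrow> complex)" where
  "shift_k k f = (\<lambda>n. if k \<le> n then f (n - k) else 0)"

text \<open>F(1) = alpha_0 + ... + alpha_(k-1) z^(k-1) + (alpha_k - 1) z^k, F(z^n) = 0 for n >= 1;
  extended linearly: F f = <f,1> F(1) = f 0 * F(1).\<close>
definition F_op :: "nat \<Rightarrow> (nat \<Rightarrow> complex) \<Rightarrow> (nat \<Rightarrow> complex) \<Rightarrow> (nat \<Rightarrow> complex)" where
  "F_op k \<alpha> f = (\<lambda>n. f 0 * (if n < k then \<alpha> n else if n = k then \<alpha> k - 1 else 0))"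

definition T_op :: "nat \<Rightarrow> (nat \<Rightarrow> complex) \<Rightarrow> (nat \<Rightarrow> complex) \<Rightarrow> (nat \<Rightarrow> complex)" where
  "T_op k \<alpha> f = (\<lambda>n. shift_k k f n + F_op k \<alpha> f n)"

definition analytic_op :: "(nat \<Rightarrow> complex) set \<Rightarrow> ((nat \<Rightarrow> complex) \<Rightarrow> (nat \<Rightarrow> complex)) \<Rightarrow> bool" where
  "analytic_op H T \<longleftrightarrow> (\<Inter>m\<in>{1..}. (T ^^ m) ` H) = {(\<lambda>n. 0)}"

end

theory Submission
  imports Defs
begin

text \<open>
  On coefficient sequences, T f carries f 0 * \<alpha> j at the positions j = 0, ..., k and copies
  f 1, f 2, ... to the positions k + 1, k + 2, ...; hence every g = T^(i+1) f satisfies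
  g (i*k + j) * \<alpha> 0 ^ (i+1) = g 0 * \<alpha> j for 1 \<le> j \<le> k.
  If all \<alpha> j with 1 \<le> j \<le> k vanish, the constant 1 is an eigenvector of T with
  eigenvalue \<alpha> 0 \<noteq> 0 and so lies in every range of T^m. Otherwise pick j with \<alpha> j \<noteq> 0:
  for g in all ranges, |g 0 * \<alpha> j| \<le> |g (i*k + j)| because |\<alpha> 0| \<le> 1, and the right-hand
  side tends to 0 since g is square summable; so g 0 = 0, and then every other entry of g
  vanishes because \<alpha> 0 \<noteq> 0.
\<close>

lemma T_op_apply_0: "1 \<le> k \<Longrightarrow> T_op k \<alpha> f 0 = f 0 * \<alpha> 0"
  by (simp add: T_op_def shift_k_def F_op_def)

lemma T_op_apply_low: "1 \<le> j \<Longrightarrow> j \<le> k \<Longrightarrow> T_op k \<alpha> f j = f 0 * \<alpha> j"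
  by (cases "j = k") (auto simp: T_op_def shift_k_def F_op_def algebra_simps)

lemma T_op_apply_high: "1 \<le> n \<Longrightarrow> T_op k \<alpha> f (k + n) = f n"
  by (simp add: T_op_def shift_k_def F_op_def)

lemma T_op_H2: assumes "f \<in> H2" shows "T_op k \<alpha> f \<in> H2"
proof -
  have "summable (\<lambda>n. (cmod (f (Suc n)))\<^sup>2)"
    using assms summable_iff_shift[of "\<lambda>n. (cmod (f n))\<^sup>2" 1] by (simp add: H2_def)
  moreover have "T_op k \<alpha> f (n + Suc k) = f (Suc n)" for n
    using T_op_apply_high[of "Suc n" k \<alpha> f] by (simp add: add.commute)
  ultimately show ?thesis
    unfolding H2_def using summable_iff_shift[of "\<lambda>n. (cmod (T_op k \<alpha> f n))\<^sup>2" "Suc k"] by simp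
qed

lemma funpow_T_op_H2: "f \<in> H2 \<Longrightarrow> (T_op k \<alpha> ^^ m) f \<in> H2"
  by (induction m) (auto intro: T_op_H2)

lemma funpow_T_op_zero: "(T_op k \<alpha> ^^ m) (\<lambda>n. 0) = (\<lambda>n. 0)"
  by (induction m) (auto simp: T_op_def shift_k_def F_op_def)

lemma H2_tendsto_zero: assumes "f \<in> H2" shows "(\<lambda>n. cmod (f n)) \<longlonglongrightarrow> 0"
proof -
  have "(\<lambda>n. (cmod (f n))\<^sup>2) \<longlonglongrightarrow> 0"
    using assms unfolding H2_def by (intro summable_LIMSEQ_zero) simp
  then show ?thesis
    using tendsto_real_sqrt[of "\<lambda>n. (cmod (f n))\<^sup>2" 0 sequentially] by simp
qed

lemma H2_single_0: "(\<lambda>n. if n = 0 then c else 0) \<in> H2"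
proof -
  have "summable (\<lambda>n. if n = 0 then (cmod c)\<^sup>2 else 0)"
    by (rule summable_single)
  also have "(\<lambda>n. if n = 0 then (cmod c)\<^sup>2 else 0) = (\<lambda>n. (cmod (if n = 0 then c else 0))\<^sup>2)"
    by (simp add: fun_eq_iff)
  finally show ?thesis
    unfolding H2_def by simp
qed

lemma funpow_T_op_block_relation:
  assumes "1 \<le> j" "j \<le> k"
  shows "(T_op k \<alpha> ^^ Suc i) f (i * k + j) * \<alpha> 0 ^ Suc i = (T_op k \<alpha> ^^ Suc i) f 0 * \<alpha> j"
proof (induction i)
  case 0
  then show ?case using assms by (simp add: T_op_apply_0 T_op_apply_low)
next
  case (Suc i)
  define h where "h = (T_op k \<alpha> ^^ Suc i) f"
  have "T_op k \<alpha> h (Suc i * k + j) = h (i * k + j)"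
    using T_op_apply_high[of "i * k + j" k \<alpha> h] assms by (simp add: algebra_simps)
  moreover have "T_op k \<alpha> h 0 = h 0 * \<alpha> 0"
    using assms by (simp add: T_op_apply_0)
  ultimately show ?case
    using Suc by (simp add: h_def algebra_simps)
qed

lemma funpow_T_op_single_0:
  assumes "\<forall>j\<in>{1..k}. \<alpha> j = 0"
  shows "(T_op k \<alpha> ^^ m) (\<lambda>n. if n = 0 then c else 0) = (\<lambda>n. if n = 0 then c * \<alpha> 0 ^ m else 0)"
proof (induction m arbitrary: c)
  case 0
  then show ?case by (simp add: fun_eq_iff)
next
  case (Suc m)
  have "T_op k \<alpha> (\<lambda>n. if n = 0 then c else 0) = (\<lambda>n. if n = 0 then c * \<alpha> 0 else 0)"
    using assms by (auto simp: T_op_def shift_k_def F_op_def fun_eq_iff not_le algebra_simps)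
  then have "(T_op k \<alpha> ^^ Suc m) (\<lambda>n. if n = 0 then c else 0)
      = (T_op k \<alpha> ^^ m) (\<lambda>n. if n = 0 then c * \<alpha> 0 else 0)"
    by (simp only: funpow_Suc_right o_apply)
  also have "\<dots> = (\<lambda>n. if n = 0 then c * \<alpha> 0 * \<alpha> 0 ^ m else 0)"
    by (rule Suc)
  also have "\<dots> = (\<lambda>n. if n = 0 then c * \<alpha> 0 ^ Suc m else 0)"
    by (simp only: power_Suc mult.assoc)
  finally show ?case .
qed

lemma single_0_in_Inter_range_funpow_T_op:
  assumes "\<forall>j\<in>{1..k}. \<alpha> j = 0" "\<alpha> 0 \<noteq> 0"
  shows "(\<lambda>n. if n = 0 then 1 else 0) \<in> (\<Inter>m\<in>{1..}. (T_op k \<alpha> ^^ m) ` H2)"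
proof -
  have eigen: "(T_op k \<alpha> ^^ m) (\<lambda>n. if n = 0 then 1 / \<alpha> 0 ^ m else 0)
      = (\<lambda>n. if n = 0 then 1 else 0)" for m
    using funpow_T_op_single_0[OF assms(1)] assms(2) by auto
  have "(\<lambda>n. if n = 0 then 1 else 0) \<in> (T_op k \<alpha> ^^ m) ` H2" for m
    by (rule image_eqI[where f = "T_op k \<alpha> ^^ m", OF eigen[symmetric] H2_single_0])
  then show ?thesis
    by blast
qed

lemma nat_pos_eq_block:
  fixes n k :: nat
  assumes "1 \<le> k" "n \<noteq> 0"
  obtains i j where "1 \<le> j" "j \<le> k" "n = i * k + j"
proof
  show "n = (n - 1) div k * k + ((n - 1) mod k + 1)"
    using assms(2) div_mult_mod_eq[of "n - 1" k] by linarith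
qed (use assms(1) in \<open>auto simp: Suc_le_eq\<close>)

lemma Inter_range_funpow_T_op_zero:
  assumes "1 \<le> k" "0 < cmod (\<alpha> 0)" "cmod (\<alpha> 0) \<le> 1" "j0 \<in> {1..k}" "\<alpha> j0 \<noteq> 0"
    and g: "g \<in> (\<Inter>m\<in>{1..}. (T_op k \<alpha> ^^ m) ` H2)"
  shows "g = (\<lambda>n. 0)"
proof -
  have range: "g \<in> (T_op k \<alpha> ^^ Suc i) ` H2" for i
    by (rule INT_D[OF g]) simp
  have block: "g (i * k + j) * \<alpha> 0 ^ Suc i = g 0 * \<alpha> j" if "1 \<le> j" "j \<le> k" for i j
  proof -
    obtain f where "g = (T_op k \<alpha> ^^ Suc i) f"
      using range by blast
    then show ?thesis
      using funpow_T_op_block_relation[OF that] by simp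
  qed
  obtain f where "f \<in> H2" "g = (T_op k \<alpha> ^^ 1) f"
    using range[of 0] by auto
  then have "g \<in> H2"
    by (simp only: funpow_T_op_H2)
  moreover have "strict_mono (\<lambda>i. i * k + j0)"
    using assms(1) by (auto simp: strict_mono_def)
  ultimately have decay: "(\<lambda>i. cmod (g (i * k + j0))) \<longlonglongrightarrow> 0"
    using LIMSEQ_subseq_LIMSEQ[OF H2_tendsto_zero] by (simp add: o_def)
  have "cmod (g 0 * \<alpha> j0) \<le> cmod (g (i * k + j0))" for i
  proof -
    have "cmod (g 0 * \<alpha> j0) = cmod (g (i * k + j0) * \<alpha> 0 ^ Suc i)"
      using assms(4) by (simp only: block atLeastAtMost_iff)
    also have "\<dots> = cmod (g (i * k + j0)) * cmod (\<alpha> 0) ^ Suc i"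
      by (simp only: norm_mult norm_power)
    also have "\<dots> \<le> cmod (g (i * k + j0))"
      using assms(3) by (intro mult_left_le power_le_one) auto
    finally show ?thesis .
  qed
  then have "cmod (g 0 * \<alpha> j0) \<le> 0"
    using decay by (intro LIMSEQ_le_const) auto
  then have g0: "g 0 = 0"
    using assms(5) by simp
  show ?thesis
  proof
    fix n
    show "g n = 0"
    proof (cases "n = 0")
      case False
      then obtain i j where "1 \<le> j" "j \<le> k" "n = i * k + j"
        using nat_pos_eq_block assms(1) by metis
      then show ?thesis
        using block[of j i] g0 assms(2) by auto
    qed (simp add: g0)
  qed
qed

theorem corollary4p5:
  fixes k :: nat and \<alpha> :: "nat \<Rightarrow> complex"
  assumes "1 \<le> k"
    and "0 < cmod (\<alpha> 0)" and "cmod (\<alpha> 0) \<le> 1"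
  shows "analytic_op H2 (T_op k \<alpha>) \<longleftrightarrow> (\<exists>j\<in>{1..k}. \<alpha> j \<noteq> 0)"
proof
  assume "analytic_op H2 (T_op k \<alpha>)"
  then have ranges: "(\<Inter>m\<in>{1..}. (T_op k \<alpha> ^^ m) ` H2) = {\<lambda>n. 0}"
    unfolding analytic_op_def .
  show "\<exists>j\<in>{1..k}. \<alpha> j \<noteq> 0"
  proof (rule ccontr)
    assume "\<not> ?thesis"
    then have "(\<lambda>n. if n = 0 then 1 else 0) \<in> (\<Inter>m\<in>{1..}. (T_op k \<alpha> ^^ m) ` H2)"
      using assms(2) by (intro single_0_in_Inter_range_funpow_T_op) auto
    then have "(\<lambda>n::nat. if n = 0 then 1::complex else 0) \<in> {\<lambda>n. 0}"
      by (simp only: ranges)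
    from fun_cong[OF singletonD[OF this], of 0] show False
      by simp
  qed
next
  assume "\<exists>j\<in>{1..k}. \<alpha> j \<noteq> 0"
  then obtain j0 where j0: "j0 \<in> {1..k}" "\<alpha> j0 \<noteq> 0"
    by blast
  show "analytic_op H2 (T_op k \<alpha>)"
    unfolding analytic_op_def
  proof (intro equalityI subsetI)
    fix g
    assume "g \<in> (\<Inter>m\<in>{1..}. (T_op k \<alpha> ^^ m) ` H2)"
    then show "g \<in> {\<lambda>n. 0}"
      using Inter_range_funpow_T_op_zero[OF assms j0] by (simp only: singleton_iff)
  next
    fix g :: "nat \<Rightarrow> complex"
    assume "g \<in> {\<lambda>n. 0}"
    moreover have "(\<lambda>n. 0) \<in> (T_op k \<alpha> ^^ m) ` H2" for m
      by (rule image_eqI[where f = "T_op k \<alpha> ^^ m", OF funpow_T_op_zero[symmetric]])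
        (simp add: H2_def)
    ultimately show "g \<in> (\<Inter>m\<in>{1..}. (T_op k \<alpha> ^^ m) ` H2)"
      by blast
  qed
qed

end
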